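(* Let $x,y$ be two distinct points of the unit disk $\mathbb{B}^2=\{z\in\mathbb{C}:|z|<1\}$. Then the hyperbolic midpoint of the hyperbolic geodesic segment joining $x$ and $y$ is constructible by ruler and compass from the points $0,1,x,y$.
   Context: The hyperbolic distance $\rho$ on $\mathbb{B}^2$ is given by $\sinh\frac{\rho(x,y)}{2}=\frac{|x-y|}{\sqrt{1-|x|^2}\sqrt{1-|y|^2}}$. The hyperbolic geodesic segment $J[x,y]$ is the arc joining $x$ and $y$ of the circle orthogonal to the unit circle $S^1$ (or of the diameter, if $0,x,y$ are collinear) containing $x,y$; its hyperbolic midpoint is the unique $z\in J[x,y]$ with $\rho(x,z)=\rho(z,y)$. A point is constructible by ruler and compass from a finite set $S\subset\mathbb{C}$ if it belongs to the smallest set $C\supseteq S$ closed under adding intersection points of lines through two distinct points of $C$ and circles with centre in $C$ passing through a point of $C$ (so the unit circle, centred at $0$ through $1$, is available). *)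

theory Defs
  imports "HOL-Analysis.Analysis"
begin

definition hdist :: "complex \<Rightarrow> complex \<Rightarrow> real" where
  "hdist x y = 2 * arsinh (cmod (x - y) / (sqrt (1 - (cmod x)\<^sup>2) * sqrt (1 - (cmod y)\<^sup>2)))"

text \<open>Hyperbolic geodesic segment J[x,y]: the segment of the diameter if 0, x, y are
  collinear; otherwise the arc joining x and y (lying in the disk) of the circle
  (centre c, radius r) orthogonal to the unit circle, i.e. |c|^2 = 1 + r^2, through x and y.\<close>
definition hgeod :: "complex \<Rightarrow> complex \<Rightarrow> complex set" where
  "hgeod x y =
    (if Im (x * cnj y) = 0 then closed_segment x y
     else {z. \<exists>c r a b. r > 0 \<and> (cmod c)\<^sup>2 = 1 + r\<^sup>2 \<and>
                x = c + of_real r * cis a \<and> y = c + of_real r * cis b \<and>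
                (\<forall>t\<in>closed_segment a b. cmod (c + of_real r * cis t) < 1) \<and>
                (\<exists>t\<in>closed_segment a b. z = c + of_real r * cis t)})"

definition hmidpoint :: "complex \<Rightarrow> complex \<Rightarrow> complex" where
  "hmidpoint x y = (THE z. z \<in> hgeod x y \<and> hdist x z = hdist z y)"

definition line_through :: "complex \<Rightarrow> complex \<Rightarrow> complex set" where
  "line_through a b = {z. \<exists>t::real. z = a + of_real t * (b - a)}"

definition circle_through :: "complex \<Rightarrow> complex \<Rightarrow> complex set" where
  "circle_through c d = {z. cmod (z - c) = cmod (d - c)}"

text \<open>Points constructible by ruler and compass from S: smallest superset of S closed under
  intersections of lines (through two distinct points) and circles (centre in the set, through
  a point of the set); distinct curves only, so the intersections are finite.\<close>
inductive_set constructible :: "complex set \<Rightarrow> complex set" for S :: "complex set" where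
  base: "z \<in> S \<Longrightarrow> z \<in> constructible S"
| line_line: "\<lbrakk>a \<in> constructible S; b \<in> constructible S; c \<in> constructible S;
     d \<in> constructible S; a \<noteq> b; c \<noteq> d; line_through a b \<noteq> line_through c d;
     z \<in> line_through a b; z \<in> line_through c d\<rbrakk> \<Longrightarrow> z \<in> constructible S"
| line_circle: "\<lbrakk>a \<in> constructible S; b \<in> constructible S; c \<in> constructible S;
     d \<in> constructible S; a \<noteq> b;
     z \<in> line_through a b; z \<in> circle_through c d\<rbrakk> \<Longrightarrow> z \<in> constructible S"
| circle_circle: "\<lbrakk>a \<in> constructible S; b \<in> constructible S; c \<in> constructible S;
     d \<in> constructible S; circle_through a b \<noteq> circle_through c d;
     z \<in> circle_through a b; z \<in> circle_through c d\<rbrakk> \<Longrightarrow> z \<in> constructible S"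

end

theory Submission
  imports Defs
begin

text \<open>The hyperbolic line through \<open>x\<close> and \<open>y\<close> and the locus of points hyperbolically
  equidistant from \<open>x\<close> and \<open>y\<close> are both circles orthogonal to the unit circle (or lines through 0),
  i.e. solution sets of \<open>A (1 + \<bar>z\<bar>\<^sup>2) = 2 Re (cnj b z)\<close> whose coefficients are polynomials in
  \<open>x\<close>, \<open>y\<close> and their conjugates. Since the constructible numbers form a field closed under
  conjugation and square roots of non-negative reals, both curves can be drawn with ruler and
  compass. The midpoint lies on both; it exists by the intermediate value theorem along \<open>J[x,y]\<close>,
  and it is the only common point in the disk because two distinct points of the disk lie on a
  unique orthogonal circle, while \<open>x\<close> lies on the first curve but not on the second.\<close>

section \<open>Ruler-and-compass constructions\<close>

lemma in_line_throughI: "z = a + of_real t * (b - a) \<Longrightarrow> z \<in> line_through a b"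
  unfolding line_through_def by blast

lemma in_circle_throughI: "cmod (z - c) = cmod (d - c) \<Longrightarrow> z \<in> circle_through c d"
  unfolding circle_through_def by simp

lemma constructible_reflect:
  assumes "a \<in> constructible S" "b \<in> constructible S"
  shows "2 * a - b \<in> constructible S"
proof (cases "a = b")
  case True
  then show ?thesis using assms by simp
next
  case False
  show ?thesis
  proof (rule constructible.line_circle[of b S a a b])
    show "2 * a - b \<in> line_through b a"
      by (rule in_line_throughI[of _ _ 2]) simp
    show "2 * a - b \<in> circle_through a b"
      by (rule in_circle_throughI) (simp add: norm_minus_commute)
  qed (use assms False in auto)
qed

text \<open>\<open>w = exp (\<pm>\<i>\<pi>/3)\<close>: the apexes of the equilateral triangles on \<open>[a, b]\<close>, where the
  circles centred at \<open>a\<close> and \<open>b\<close> through each other meet.\<close>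
lemma constructible_equilateral_apex:
  assumes "a \<in> constructible S" "b \<in> constructible S"
    and "w \<in> {Complex (1/2) (sqrt 3 / 2), Complex (1/2) (- sqrt 3 / 2)}"
  shows "a + (b - a) * w \<in> constructible S"
proof (cases "a = b")
  case True
  then show ?thesis using assms by simp
next
  case False
  have w: "cmod w = 1" "cmod (w - 1) = 1"
    using assms(3) by (elim insertE; simp add: cmod_def power_divide)+
  have "b \<in> circle_through a b" "b \<notin> circle_through b a"
    using False by (simp_all add: circle_through_def)
  then have "circle_through a b \<noteq> circle_through b a" by blast
  moreover have "a + (b - a) * w \<in> circle_through a b"
    using w by (intro in_circle_throughI) (simp add: norm_mult)
  moreover have "a + (b - a) * w \<in> circle_through b a"
  proof (rule in_circle_throughI)
    have "a + (b - a) * w - b = (b - a) * (w - 1)"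
      by (simp add: algebra_simps)
    then show "cmod (a + (b - a) * w - b) = cmod (a - b)"
      using w by (simp add: norm_mult norm_minus_commute)
  qed
  ultimately show ?thesis
    by (rule constructible.circle_circle[OF assms(1,2,2,1)])
qed

lemma constructible_midpoint:
  assumes "a \<in> constructible S" "b \<in> constructible S"
  shows "(a + b) / 2 \<in> constructible S"
proof (cases "a = b")
  case True
  then show ?thesis using assms by simp
next
  case False
  define P where "P = a + (b - a) * Complex (1/2) (sqrt 3 / 2)"
  define Q where "Q = a + (b - a) * Complex (1/2) (- sqrt 3 / 2)"
  have PQ: "P \<in> constructible S" "Q \<in> constructible S"
    unfolding P_def Q_def by (simp_all add: constructible_equilateral_apex assms)
  have "P \<noteq> Q"
    using False unfolding P_def Q_def by (auto simp: complex_eq_iff)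
  have "P \<notin> line_through a b"
  proof
    assume "P \<in> line_through a b"
    then obtain t where "P = a + of_real t * (b - a)"
      unfolding line_through_def by auto
    then have "(b - a) * Complex (1/2) (sqrt 3 / 2) = (b - a) * of_real t"
      unfolding P_def by (simp add: algebra_simps)
    then have "Complex (1/2) (sqrt 3 / 2) = of_real t"
      using False by simp
    then show False
      by (simp add: complex_eq_iff)
  qed
  moreover have "P \<in> line_through P Q"
    by (rule in_line_throughI[of _ _ 0]) simp
  ultimately have "line_through a b \<noteq> line_through P Q" by blast
  moreover have "(a + b) / 2 \<in> line_through a b"
    by (rule in_line_throughI[of _ _ "1/2"]) (simp add: field_simps)
  moreover have "(a + b) / 2 \<in> line_through P Q"
    unfolding P_def Q_def by (rule in_line_throughI[of _ _ "1/2"]) (simp add: complex_eq_iff field_simps)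
  ultimately show ?thesis
    by (rule constructible.line_line[OF assms PQ False \<open>P \<noteq> Q\<close>])
qed

context
  fixes S :: "complex set"
  assumes zero_in: "0 \<in> S" and one_in: "1 \<in> S"
begin

lemma constructible_zero: "0 \<in> constructible S"
  by (rule constructible.base[OF zero_in])

lemma constructible_one: "1 \<in> constructible S"
  by (rule constructible.base[OF one_in])

lemma constructible_add:
  assumes "a \<in> constructible S" "b \<in> constructible S"
  shows "a + b \<in> constructible S"
proof -
  have "2 * ((a + b) / 2) - 0 \<in> constructible S"
    by (rule constructible_reflect[OF constructible_midpoint[OF assms] constructible_zero])
  moreover have "2 * ((a + b) / 2) - 0 = a + b" by simp
  ultimately show ?thesis by (simp only:)
qed

lemma constructible_uminus: "a \<in> constructible S \<Longrightarrow> - a \<in> constructible S"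
  using constructible_reflect[OF constructible_zero, of a] by simp

lemma constructible_diff:
  assumes "a \<in> constructible S" "b \<in> constructible S"
  shows "a - b \<in> constructible S"
  using constructible_add[OF assms(1) constructible_uminus[OF assms(2)]] by simp

text \<open>Intersect the circles centred at 0 and 1 through \<open>a\<close>. For non-real \<open>a\<close> they differ: if they
  coincided, \<open>\<bar>a\<bar>\<close> and \<open>-\<bar>a\<bar>\<close> would be equidistant from 1.\<close>
lemma constructible_cnj:
  assumes a: "a \<in> constructible S"
  shows "cnj a \<in> constructible S"
proof (cases "Im a = 0")
  case True
  then have "cnj a = a" by (simp add: complex_eq_iff)
  then show ?thesis using a by simp
next
  case False
  have "circle_through 0 a \<noteq> circle_through 1 a"
  proof
    assume eq: "circle_through 0 a = circle_through 1 a"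
    have "of_real (cmod a) \<in> circle_through 1 a" "- of_real (cmod a) \<in> circle_through 1 a"
      unfolding eq[symmetric] by (simp_all add: circle_through_def)
    then have "cmod (of_real (cmod a) - 1) = cmod (- of_real (cmod a) - 1)"
      by (simp add: circle_through_def)
    moreover have "of_real (cmod a) - 1 = (of_real (cmod a - 1) :: complex)"
      and "- of_real (cmod a) - 1 = (of_real (- cmod a - 1) :: complex)"
      by simp_all
    ultimately have "\<bar>cmod a - 1\<bar> = \<bar>- cmod a - 1\<bar>"
      by (simp only: norm_of_real)
    then have "cmod a = 0"
      using norm_ge_zero[of a] by (simp add: abs_if split: if_splits)
    then show False using False by simp
  qed
  moreover have "cnj a \<in> circle_through 0 a"
    by (simp add: circle_through_def)
  moreover have "cnj a \<in> circle_through 1 a"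
  proof (rule in_circle_throughI)
    have "cnj a - 1 = cnj (a - 1)" by simp
    then show "cmod (cnj a - 1) = cmod (a - 1)"
      by (simp only: complex_mod_cnj)
  qed
  ultimately show ?thesis
    by (rule constructible.circle_circle[OF constructible_zero a constructible_one a])
qed

text \<open>The line through the apexes \<open>\<pm>\<i>\<surd>3\<close> of the equilateral triangles on \<open>[-1, 1]\<close> is the
  imaginary axis; it meets the unit circle in \<open>\<i>\<close>.\<close>
lemma constructible_ii: "\<i> \<in> constructible S"
proof -
  have m1: "-1 \<in> constructible S"
    by (rule constructible_uminus[OF constructible_one])
  define P where "P = -1 + (1 - -1) * Complex (1/2) (sqrt 3 / 2)"
  define Q where "Q = -1 + (1 - -1) * Complex (1/2) (- sqrt 3 / 2)"
  have PQ: "P \<in> constructible S" "Q \<in> constructible S"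
    unfolding P_def Q_def by (rule constructible_equilateral_apex[OF m1 constructible_one], simp)+
  have P: "P = Complex 0 (sqrt 3)" and Q: "Q = Complex 0 (- sqrt 3)"
    unfolding P_def Q_def by (simp_all add: complex_eq_iff)
  have "P \<noteq> Q"
    unfolding P Q by simp
  moreover have "\<i> \<in> line_through P Q"
    unfolding P Q
    by (rule in_line_throughI[of _ _ "(sqrt 3 - 1) / (2 * sqrt 3)"]) (simp add: complex_eq_iff field_simps)
  moreover have "\<i> \<in> circle_through 0 1"
    by (simp add: circle_through_def)
  ultimately show ?thesis
    by (rule constructible.line_circle[OF PQ constructible_zero constructible_one])
qed

lemma constructible_ii_mult_of_real:
  assumes "of_real r \<in> constructible S"
  shows "\<i> * of_real r \<in> constructible S"
proof -
  have "\<i> * of_real r \<in> line_through 0 \<i>"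
    by (rule in_line_throughI[of _ _ r]) simp
  moreover have "\<i> * of_real r \<in> circle_through 0 (of_real r)"
    by (simp add: circle_through_def norm_mult)
  moreover have "0 \<noteq> \<i>"
    by (simp add: complex_eq_iff)
  ultimately show ?thesis
    using constructible.line_circle[OF constructible_zero constructible_ii constructible_zero assms]
    by blast
qed

lemma constructible_of_real_if_ii_mult:
  assumes "\<i> * of_real r \<in> constructible S"
  shows "of_real r \<in> constructible S"
proof -
  have "of_real r \<in> line_through 0 1"
    by (rule in_line_throughI[of _ _ r]) simp
  moreover have "of_real r \<in> circle_through 0 (\<i> * of_real r)"
    by (simp add: circle_through_def norm_mult)
  ultimately show ?thesis
    using constructible.line_circle[OF constructible_zero constructible_one constructible_zero assms]
    by simp
qed

lemma constructible_Re:
  assumes "a \<in> constructible S"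
  shows "of_real (Re a) \<in> constructible S"
proof -
  have "(a + cnj a) / 2 \<in> constructible S"
    by (rule constructible_midpoint[OF assms constructible_cnj[OF assms]])
  moreover have "(a + cnj a) / 2 = of_real (Re a)"
    by (simp add: complex_eq_iff)
  ultimately show ?thesis by (simp only:)
qed

lemma constructible_Im:
  assumes "a \<in> constructible S"
  shows "of_real (Im a) \<in> constructible S"
proof (rule constructible_of_real_if_ii_mult)
  have "(a - cnj a) / 2 \<in> constructible S"
    by (rule constructible_midpoint[OF assms constructible_uminus[OF constructible_cnj[OF assms]], simplified])
  moreover have "(a - cnj a) / 2 = \<i> * of_real (Im a)"
    by (simp add: complex_eq_iff)
  ultimately show "\<i> * of_real (Im a) \<in> constructible S" by (simp only:)
qed

lemma constructible_of_Re_Im: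
  assumes "of_real (Re z) \<in> constructible S" "of_real (Im z) \<in> constructible S"
  shows "z \<in> constructible S"
proof -
  have "of_real (Re z) + \<i> * of_real (Im z) \<in> constructible S"
    by (intro constructible_add constructible_ii_mult_of_real assms)
  moreover have "of_real (Re z) + \<i> * of_real (Im z) = z"
    by (simp add: complex_eq_iff)
  ultimately show ?thesis by (simp only:)
qed

text \<open>Intercept theorem: the parallel through \<open>r\<close> to the line from \<open>1\<close> to \<open>\<i> s\<close> meets the
  imaginary axis in \<open>\<i> r s\<close>.\<close>
lemma constructible_of_real_mult:
  assumes r: "of_real r \<in> constructible S" and s: "of_real s \<in> constructible S"
  shows "of_real (r * s) \<in> constructible S"
proof (cases "r * s = 0")
  case True
  then have "of_real (r * s) = (0::complex)" by simp
  then show ?thesis by (simp only: constructible_zero)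
next
  case False
  define p where "p = of_real r + (\<i> * of_real s - 1)"
  have p: "p \<in> constructible S"
    unfolding p_def by (intro constructible_add constructible_diff constructible_ii_mult_of_real r s
        constructible_one)
  have "0 \<notin> line_through (of_real r) p"
  proof
    assume "0 \<in> line_through (of_real r) p"
    then obtain t where "0 = of_real r + of_real t * (p - of_real r)"
      unfolding line_through_def by blast
    then have "r - t = 0" "t * s = 0"
      unfolding p_def by (simp_all add: complex_eq_iff)
    then show False using False by simp
  qed
  moreover have "0 \<in> line_through 0 \<i>"
    by (rule in_line_throughI[of _ _ 0]) simp
  ultimately have "line_through 0 \<i> \<noteq> line_through (of_real r) p" by blast
  moreover have "\<i> * of_real (r * s) \<in> line_through 0 \<i>"
    by (rule in_line_throughI[of _ _ "r * s"]) simp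
  moreover have "\<i> * of_real (r * s) \<in> line_through (of_real r) p"
    unfolding p_def by (rule in_line_throughI[of _ _ r]) (simp add: complex_eq_iff)
  moreover have "0 \<noteq> \<i>" "of_real r \<noteq> p"
    by (simp_all add: complex_eq_iff p_def)
  ultimately have "\<i> * of_real (r * s) \<in> constructible S"
    using constructible.line_line[OF constructible_zero constructible_ii r p] by blast
  then show ?thesis by (rule constructible_of_real_if_ii_mult)
qed

text \<open>Intercept theorem again: the parallel through \<open>1\<close> to the line from \<open>r\<close> to \<open>\<i>\<close> meets
  the imaginary axis in \<open>\<i> / r\<close>.\<close>
lemma constructible_of_real_inverse:
  assumes r: "of_real r \<in> constructible S"
  shows "of_real (inverse r) \<in> constructible S"
proof (cases "r = 0")
  case True
  then show ?thesis by (simp add: constructible_zero)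
next
  case False
  define p where "p = 1 + (\<i> - of_real r)"
  have p: "p \<in> constructible S"
    unfolding p_def by (intro constructible_add constructible_diff constructible_ii r constructible_one)
  have "0 \<notin> line_through 1 p"
  proof
    assume "0 \<in> line_through 1 p"
    then obtain t where "0 = 1 + of_real t * (p - 1)"
      unfolding line_through_def by blast
    then show False
      unfolding p_def by (auto simp: complex_eq_iff)
  qed
  moreover have "0 \<in> line_through 0 \<i>"
    by (rule in_line_throughI[of _ _ 0]) simp
  ultimately have "line_through 0 \<i> \<noteq> line_through 1 p" by blast
  moreover have "\<i> * of_real (inverse r) \<in> line_through 0 \<i>"
    by (rule in_line_throughI[of _ _ "inverse r"]) simp
  moreover have "\<i> * of_real (inverse r) \<in> line_through 1 p"
    unfolding p_def by (rule in_line_throughI[of _ _ "inverse r"]) (simp add: complex_eq_iff False power2_eq_square)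
  moreover have "0 \<noteq> \<i>" "1 \<noteq> p"
    by (simp_all add: complex_eq_iff p_def)
  ultimately have "\<i> * of_real (inverse r) \<in> constructible S"
    using constructible.line_line[OF constructible_zero constructible_ii constructible_one p] by blast
  then show ?thesis by (rule constructible_of_real_if_ii_mult)
qed

lemma constructible_mult:
  assumes "a \<in> constructible S" "b \<in> constructible S"
  shows "a * b \<in> constructible S"
proof (rule constructible_of_Re_Im)
  note parts = constructible_Re[OF assms(1)] constructible_Im[OF assms(1)]
    constructible_Re[OF assms(2)] constructible_Im[OF assms(2)]
  show "of_real (Re (a * b)) \<in> constructible S"
    unfolding times_complex.sel(1) of_real_diff
    by (intro constructible_diff constructible_of_real_mult parts)
  show "of_real (Im (a * b)) \<in> constructible S"
    unfolding times_complex.sel(2) of_real_add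
    by (intro constructible_add constructible_of_real_mult parts)
qed

lemma constructible_of_real_norm_square:
  assumes "a \<in> constructible S"
  shows "of_real ((cmod a)\<^sup>2) \<in> constructible S"
  unfolding complex_norm_square by (intro constructible_mult constructible_cnj assms)

lemma constructible_inverse:
  assumes "a \<in> constructible S"
  shows "inverse a \<in> constructible S"
proof -
  have "inverse a = cnj a * of_real (inverse ((cmod a)\<^sup>2))"
    by (cases "a = 0") (simp_all add: complex_norm_square field_simps del: of_real_power)
  then show ?thesis
    by (simp only:) (intro constructible_mult constructible_cnj constructible_of_real_inverse
        constructible_of_real_norm_square assms)
qed

lemma constructible_divide:
  assumes "a \<in> constructible S" "b \<in> constructible S"
  shows "a / b \<in> constructible S"
  unfolding divide_inverse by (intro constructible_mult constructible_inverse assms)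

text \<open>The circle on the diameter \<open>[-1, r]\<close> meets the imaginary axis in \<open>\<i> \<surd>r\<close>.\<close>
lemma constructible_of_real_sqrt:
  assumes r: "of_real r \<in> constructible S" and "r \<ge> 0"
  shows "of_real (sqrt r) \<in> constructible S"
proof (rule constructible_of_real_if_ii_mult)
  define c where "c = (of_real r + -1) / (2::complex)"
  have c: "c \<in> constructible S"
    unfolding c_def by (intro constructible_midpoint constructible_uminus r constructible_one)
  have "\<i> * of_real (sqrt r) \<in> line_through 0 \<i>"
    by (rule in_line_throughI[of _ _ "sqrt r"]) simp
  moreover have "(cmod (\<i> * of_real (sqrt r) - c))\<^sup>2 = (cmod (of_real r - c))\<^sup>2"
    unfolding c_def cmod_power2 using \<open>r \<ge> 0\<close> by (simp add: power2_eq_square algebra_simps)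
  then have "\<i> * of_real (sqrt r) \<in> circle_through c (of_real r)"
    unfolding circle_through_def by (simp add: power2_eq_iff_nonneg)
  moreover have "0 \<noteq> \<i>"
    by (simp add: complex_eq_iff)
  ultimately show "\<i> * of_real (sqrt r) \<in> constructible S"
    using constructible.line_circle[OF constructible_zero constructible_ii c r] by blast
qed

end

section \<open>Circles orthogonal to the unit circle\<close>

text \<open>For \<open>A \<noteq> 0\<close> the circle with centre \<open>b / A\<close> and squared radius \<open>\<bar>b / A\<bar>\<^sup>2 - 1\<close>, which
  is orthogonal to the unit circle; for \<open>A = 0\<close> the line through 0 perpendicular to \<open>b\<close>.\<close>
definition orth_circle :: "real \<Rightarrow> complex \<Rightarrow> complex set" where
  "orth_circle A b = {z. A * (1 + (cmod z)\<^sup>2) = 2 * Re (cnj b * z)}"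

lemma mem_orth_circle_iff:
  "z \<in> orth_circle A b \<longleftrightarrow> A * (1 + (Re z)\<^sup>2 + (Im z)\<^sup>2) = 2 * (Re b * Re z + Im b * Im z)"
  by (simp add: orth_circle_def cmod_power2 add.assoc)

lemma orth_circle_zero: "orth_circle 0 0 = UNIV"
  by (simp add: orth_circle_def)

lemma orth_circle_neq_UNIV:
  assumes "A \<noteq> 0 \<or> b \<noteq> 0"
  shows "orth_circle A b \<noteq> UNIV"
proof
  assume UNIV: "orth_circle A b = UNIV"
  then have "0 \<in> orth_circle A b"
    by simp
  then have "A = 0"
    by (simp add: orth_circle_def)
  then have "b \<in> orth_circle 0 b"
    using UNIV by simp
  then have "2 * (Re b * Re b) + 2 * (Im b * Im b) = 0"
    by (simp add: mem_orth_circle_iff)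
  then have "Re b * Re b + Im b * Im b = 0"
    by linarith
  with \<open>A = 0\<close> show False
    using assms by (simp add: complex_eq_iff)
qed

lemma orth_circle_scale:
  assumes "c \<noteq> 0"
  shows "orth_circle (c * A) (of_real c * b) = orth_circle A b"
proof (intro set_eqI)
  fix z
  have "z \<in> orth_circle (c * A) (of_real c * b) \<longleftrightarrow>
      c * (A * (1 + (Re z)\<^sup>2 + (Im z)\<^sup>2)) = c * (2 * (Re b * Re z + Im b * Im z))"
    by (simp add: mem_orth_circle_iff algebra_simps)
  also have "\<dots> \<longleftrightarrow> z \<in> orth_circle A b"
    using assms by (simp add: mem_orth_circle_iff)
  finally show "z \<in> orth_circle (c * A) (of_real c * b) \<longleftrightarrow> z \<in> orth_circle A b" .
qed

lemma orth_circle_eq_circle: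
  assumes "A \<noteq> 0"
  shows "z \<in> orth_circle A b \<longleftrightarrow> (cmod (z - b / of_real A))\<^sup>2 = (cmod (b / of_real A))\<^sup>2 - 1"
proof -
  have e: "(cmod (z - b / of_real A))\<^sup>2 - ((cmod (b / of_real A))\<^sup>2 - 1)
      = (A * (1 + (Re z)\<^sup>2 + (Im z)\<^sup>2) - 2 * (Re b * Re z + Im b * Im z)) / A"
    unfolding cmod_power2 using assms by (simp add: power2_eq_square field_simps)
  have "z \<in> orth_circle A b \<longleftrightarrow>
      (A * (1 + (Re z)\<^sup>2 + (Im z)\<^sup>2) - 2 * (Re b * Re z + Im b * Im z)) / A = 0"
    unfolding mem_orth_circle_iff using assms by simp
  also have "\<dots> \<longleftrightarrow> (cmod (z - b / of_real A))\<^sup>2 - ((cmod (b / of_real A))\<^sup>2 - 1) = 0"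
    by (simp only: e)
  finally show ?thesis by simp
qed

lemma orth_circle_eq_line:
  assumes "b \<noteq> 0"
  shows "orth_circle 0 b = line_through 0 (\<i> * b)"
proof (intro set_eqI iffI)
  fix z
  assume "z \<in> orth_circle 0 b"
  then have "Re b * Re z + Im b * Im z = 0"
    by (simp add: mem_orth_circle_iff)
  then have "Im (z / (\<i> * b)) = 0"
    by (simp add: Im_divide algebra_simps)
  then have "z / (\<i> * b) = of_real (Re (z / (\<i> * b)))"
    by (simp add: complex_eq_iff)
  then have "z = 0 + of_real (Re (z / (\<i> * b))) * (\<i> * b - 0)"
    using assms by (simp add: divide_eq_eq)
  then show "z \<in> line_through 0 (\<i> * b)"
    by (rule in_line_throughI)
next
  fix z
  assume "z \<in> line_through 0 (\<i> * b)"
  then obtain t where "z = of_real t * (\<i> * b)"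
    by (auto simp: line_through_def)
  then show "z \<in> orth_circle 0 b"
    by (simp add: mem_orth_circle_iff algebra_simps)
qed

lemma convex_orth_circle_zero: "convex (orth_circle 0 b)"
proof (rule convexI)
  fix x y and u v :: real
  assume "x \<in> orth_circle 0 b" "y \<in> orth_circle 0 b"
  then have "Re b * Re x + Im b * Im x = 0" "Re b * Re y + Im b * Im y = 0"
    by (simp_all add: mem_orth_circle_iff)
  moreover have lin: "Re b * Re (u *\<^sub>R x + v *\<^sub>R y) + Im b * Im (u *\<^sub>R x + v *\<^sub>R y)
      = u * (Re b * Re x + Im b * Im x) + v * (Re b * Re y + Im b * Im y)"
    by (simp add: algebra_simps)
  ultimately show "u *\<^sub>R x + v *\<^sub>R y \<in> orth_circle 0 b"
    unfolding mem_orth_circle_iff by (simp only: lin) simp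
qed

definition constructible_curve :: "complex set \<Rightarrow> complex set \<Rightarrow> bool" where
  "constructible_curve S K \<longleftrightarrow>
     (\<exists>a b. a \<in> constructible S \<and> b \<in> constructible S \<and> a \<noteq> b \<and> K = line_through a b) \<or>
     (\<exists>c d. c \<in> constructible S \<and> d \<in> constructible S \<and> K = circle_through c d)"

lemma constructible_curve_intersection:
  assumes "constructible_curve S K" "constructible_curve S L" "K \<noteq> L" "z \<in> K" "z \<in> L"
  shows "z \<in> constructible S"
  using assms unfolding constructible_curve_def
  by (elim disjE exE conjE; hypsubst)
    (blast intro: constructible.line_line constructible.line_circle constructible.circle_circle)+

context
  fixes S :: "complex set"
  assumes zero_in: "0 \<in> S" and one_in: "1 \<in> S"
begin

lemma constructible_curve_orth_circle:
  assumes A: "of_real A \<in> constructible S" and b: "b \<in> constructible S"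
    and proper: "orth_circle A b \<noteq> UNIV" and z: "z \<in> orth_circle A b"
  shows "constructible_curve S (orth_circle A b)"
proof (cases "A = 0")
  case True
  then have "b \<noteq> 0"
    using proper orth_circle_zero by auto
  with True have "orth_circle A b = line_through 0 (\<i> * b)"
    using orth_circle_eq_line by simp
  moreover have "\<i> * b \<in> constructible S"
    by (intro constructible_mult constructible_ii b zero_in one_in)
  moreover have "0 \<noteq> \<i> * b"
    using \<open>b \<noteq> 0\<close> by simp
  ultimately show ?thesis
    unfolding constructible_curve_def using constructible_zero[OF zero_in one_in] by blast
next
  case False
  define c where "c = b / of_real A"
  define \<rho> where "\<rho> = sqrt ((cmod c)\<^sup>2 - 1)"
  have circle: "w \<in> orth_circle A b \<longleftrightarrow> (cmod (w - c))\<^sup>2 = (cmod c)\<^sup>2 - 1" for w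
    unfolding c_def by (rule orth_circle_eq_circle[OF False])
  have radius_sq: "(cmod c)\<^sup>2 - 1 \<ge> 0"
    using circle[of z] z by (metis zero_le_power2)
  have c: "c \<in> constructible S"
    unfolding c_def by (intro constructible_divide A b zero_in one_in)
  have "of_real ((cmod c)\<^sup>2 - 1) \<in> constructible S"
    unfolding of_real_diff of_real_1
    by (intro constructible_diff constructible_of_real_norm_square constructible_one c zero_in one_in)
  then have "of_real \<rho> \<in> constructible S"
    unfolding \<rho>_def by (intro constructible_of_real_sqrt radius_sq zero_in one_in)
  then have "c + of_real \<rho> \<in> constructible S"
    by (intro constructible_add c zero_in one_in)
  moreover have "orth_circle A b = circle_through c (c + of_real \<rho>)"
  proof (intro set_eqI)
    fix w
    have "w \<in> circle_through c (c + of_real \<rho>) \<longleftrightarrow> cmod (w - c) = \<rho>"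
      using radius_sq by (simp add: circle_through_def \<rho>_def)
    also have "\<dots> \<longleftrightarrow> (cmod (w - c))\<^sup>2 = (cmod c)\<^sup>2 - 1"
      unfolding \<rho>_def using radius_sq by (auto simp: real_sqrt_unique)
    finally show "w \<in> orth_circle A b \<longleftrightarrow> w \<in> circle_through c (c + of_real \<rho>)"
      using circle by simp
  qed
  ultimately show ?thesis
    unfolding constructible_curve_def using c by blast
qed

end

section \<open>Hyperbolic lines and bisectors\<close>

text \<open>A point \<open>z\<close> lies on \<open>orth_circle A b\<close> iff \<open>(A, Re b, Im b)\<close> is perpendicular to
  \<open>(1 + \<bar>z\<bar>\<^sup>2, -2 Re z, -2 Im z)\<close>. The coefficients below are half the cross product \<open>u \<times> v\<close> of these
  vectors \<open>u\<close> for \<open>z = x\<close> and \<open>v\<close> for \<open>z = y\<close>.\<close>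
definition hyperbolic_line :: "complex \<Rightarrow> complex \<Rightarrow> complex set" where
  "hyperbolic_line x y = orth_circle (2 * Im (cnj x * y))
     (\<i> * (of_real (1 + (cmod y)\<^sup>2) * x - of_real (1 + (cmod x)\<^sup>2) * y))"

lemma left_mem_hyperbolic_line: "x \<in> hyperbolic_line x y"
  unfolding hyperbolic_line_def mem_orth_circle_iff cmod_power2
  by (simp add: algebra_simps power2_eq_square)

lemma right_mem_hyperbolic_line: "y \<in> hyperbolic_line x y"
  unfolding hyperbolic_line_def mem_orth_circle_iff cmod_power2
  by (simp add: algebra_simps power2_eq_square)

lemma eq_if_one_plus_norm_square_mult_eq:
  assumes "cmod x < 1" "cmod y < 1"
    and eq: "of_real (1 + (cmod y)\<^sup>2) * x = of_real (1 + (cmod x)\<^sup>2) * y"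
  shows "x = y"
proof -
  have pos: "1 + (cmod x)\<^sup>2 > 0" "1 + (cmod y)\<^sup>2 > 0"
    by (simp_all add: add_pos_nonneg)
  have "(1 + (cmod y)\<^sup>2) * cmod x = (1 + (cmod x)\<^sup>2) * cmod y"
    using arg_cong[OF eq, of cmod] unfolding norm_mult norm_of_real using pos by simp
  then have "(cmod x - cmod y) * (1 - cmod x * cmod y) = 0"
    by (simp add: algebra_simps power2_eq_square)
  moreover have "cmod x * cmod y \<le> cmod x"
    using assms(2) by (simp add: mult_left_le)
  then have "cmod x * cmod y < 1"
    using assms(1) by linarith
  ultimately have "cmod x = cmod y"
    by simp
  with eq have "of_real (1 + (cmod y)\<^sup>2) * x = of_real (1 + (cmod y)\<^sup>2) * y"
    by (simp only:)
  moreover have "(of_real (1 + (cmod y)\<^sup>2) :: complex) \<noteq> 0"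
    using pos(2) by (metis less_irrefl of_real_eq_0_iff)
  ultimately show "x = y"
    by simp
qed

lemma hyperbolic_line_neq_UNIV:
  assumes "cmod x < 1" "cmod y < 1" "x \<noteq> y"
  shows "hyperbolic_line x y \<noteq> UNIV"
  unfolding hyperbolic_line_def
  using eq_if_one_plus_norm_square_mult_eq[OF assms(1,2)] assms(3)
  by (intro orth_circle_neq_UNIV) auto

text \<open>The coefficient vector \<open>w\<close> of an orthogonal circle through \<open>x\<close> and \<open>y\<close> is perpendicular to
  \<open>u\<close> and \<open>v\<close>, hence parallel to \<open>u \<times> v\<close> by the expansion \<open>w \<times> (u \<times> v) = (w \<cdot> v) u - (w \<cdot> u) v\<close>;
  \<open>u \<times> v \<noteq> 0\<close> as \<open>x \<noteq> y\<close> lie in the disk.\<close>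
lemma orth_circle_eq_hyperbolic_line:
  assumes x: "cmod x < 1" and y: "cmod y < 1" and "x \<noteq> y"
    and xK: "x \<in> orth_circle A b" and yK: "y \<in> orth_circle A b"
    and proper: "orth_circle A b \<noteq> UNIV"
  shows "orth_circle A b = hyperbolic_line x y"
proof -
  define A0 where "A0 = 2 * Im (cnj x * y)"
  define b0 where "b0 = \<i> * (of_real (1 + (cmod y)\<^sup>2) * x - of_real (1 + (cmod x)\<^sup>2) * y)"
  have b0: "b0 \<noteq> 0"
    unfolding b0_def using eq_if_one_plus_norm_square_mult_eq[OF x y] \<open>x \<noteq> y\<close> by auto
  have Lx: "A * (1 + (Re x)\<^sup>2 + (Im x)\<^sup>2) = 2 * (Re b * Re x + Im b * Im x)"
    using xK by (simp add: mem_orth_circle_iff)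
  have Ly: "A * (1 + (Re y)\<^sup>2 + (Im y)\<^sup>2) = 2 * (Re b * Re y + Im b * Im y)"
    using yK by (simp add: mem_orth_circle_iff)
  have parallel: "A * Re b0 = A0 * Re b" "A * Im b0 = A0 * Im b" "Re b * Im b0 = Im b * Re b0"
    unfolding A0_def b0_def using Lx Ly by (simp_all add: cmod_power2) algebra+
  define s where "s = Re (b / b0)"
  have "Im (b / b0) = 0"
    using parallel(3) by (simp add: Im_divide algebra_simps)
  then have "b / b0 = of_real s"
    unfolding s_def by (simp add: complex_eq_iff)
  then have b: "b = of_real s * b0"
    using b0 by (simp add: divide_eq_eq)
  have "A = s * A0"
  proof (cases "Re b0 = 0")
    case True
    then have "Im b0 \<noteq> 0"
      using b0 by (simp add: complex_eq_iff)
    then show ?thesis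
      using parallel(2) b by (simp add: algebra_simps)
  next
    case False
    then show ?thesis
      using parallel(1) b by (simp add: algebra_simps)
  qed
  moreover have "s \<noteq> 0"
    using proper b \<open>A = s * A0\<close> orth_circle_zero by auto
  ultimately show ?thesis
    using b orth_circle_scale unfolding hyperbolic_line_def A0_def b0_def by simp
qed

definition hyperbolic_bisector :: "complex \<Rightarrow> complex \<Rightarrow> complex set" where
  "hyperbolic_bisector x y = orth_circle ((cmod x)\<^sup>2 - (cmod y)\<^sup>2)
     (of_real (1 - (cmod y)\<^sup>2) * x - of_real (1 - (cmod x)\<^sup>2) * y)"

lemma mem_hyperbolic_bisector_iff:
  "z \<in> hyperbolic_bisector x y \<longleftrightarrow>
     (cmod (x - z))\<^sup>2 * (1 - (cmod y)\<^sup>2) = (cmod (z - y))\<^sup>2 * (1 - (cmod x)\<^sup>2)"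
proof -
  define B where "B = of_real (1 - (cmod y)\<^sup>2) * x - of_real (1 - (cmod x)\<^sup>2) * y"
  have "(cmod (x - z))\<^sup>2 * (1 - (cmod y)\<^sup>2) - (cmod (z - y))\<^sup>2 * (1 - (cmod x)\<^sup>2)
      = ((cmod x)\<^sup>2 - (cmod y)\<^sup>2) * (1 + (Re z)\<^sup>2 + (Im z)\<^sup>2) - 2 * (Re B * Re z + Im B * Im z)"
    unfolding B_def cmod_power2 by (simp add: power2_eq_square algebra_simps)
  then show ?thesis
    unfolding hyperbolic_bisector_def B_def[symmetric] mem_orth_circle_iff by linarith
qed

lemma left_not_mem_hyperbolic_bisector:
  assumes "cmod x < 1" "x \<noteq> y"
  shows "x \<notin> hyperbolic_bisector x y"
proof
  assume "x \<in> hyperbolic_bisector x y"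
  then have "(cmod (x - y))\<^sup>2 * (1 - (cmod x)\<^sup>2) = 0"
    by (simp add: mem_hyperbolic_bisector_iff)
  moreover have "(cmod (x - y))\<^sup>2 > 0" "1 - (cmod x)\<^sup>2 > 0"
    using assms by (simp_all add: abs_square_less_1)
  ultimately show False
    by simp
qed

lemma arsinh_real_eq_iff: "arsinh (u::real) = arsinh v \<longleftrightarrow> u = v"
  by (metis sinh_arsinh_real)

lemma hdist_self: "hdist x x = 0"
  by (simp add: hdist_def)

lemma hdist_nonneg:
  assumes "cmod x < 1" "cmod y < 1"
  shows "hdist x y \<ge> 0"
proof -
  define v where "v = cmod (x - y) / (sqrt (1 - (cmod x)\<^sup>2) * sqrt (1 - (cmod y)\<^sup>2))"
  have "(cmod x)\<^sup>2 \<le> 1" "(cmod y)\<^sup>2 \<le> 1"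
    using assms by (simp_all add: abs_square_le_1 less_imp_le)
  then have "v \<ge> 0"
    unfolding v_def by simp
  then have "arsinh v \<ge> 0"
    using arsinh_real_neg_iff[of v] by linarith
  then show ?thesis
    unfolding hdist_def v_def[symmetric] by simp
qed

lemma hdist_eq_iff_mem_hyperbolic_bisector:
  assumes "cmod x < 1" "cmod y < 1" "cmod z < 1"
  shows "hdist x z = hdist z y \<longleftrightarrow> z \<in> hyperbolic_bisector x y"
proof -
  define sx where "sx = sqrt (1 - (cmod x)\<^sup>2)"
  define sy where "sy = sqrt (1 - (cmod y)\<^sup>2)"
  define sz where "sz = sqrt (1 - (cmod z)\<^sup>2)"
  have pos: "sx > 0" "sy > 0" "sz > 0"
    unfolding sx_def sy_def sz_def using assms by (simp_all add: abs_square_less_1)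
  have sq: "sx\<^sup>2 = 1 - (cmod x)\<^sup>2" "sy\<^sup>2 = 1 - (cmod y)\<^sup>2"
    unfolding sx_def sy_def using assms by (simp_all add: abs_square_le_1 less_imp_le)
  have "hdist x z = hdist z y \<longleftrightarrow> cmod (x - z) / (sx * sz) = cmod (z - y) / (sz * sy)"
    unfolding hdist_def sx_def sy_def sz_def by (simp add: arsinh_real_eq_iff)
  also have "\<dots> \<longleftrightarrow> cmod (x - z) * sy = cmod (z - y) * sx"
    using pos by (simp add: field_simps)
  also have "\<dots> \<longleftrightarrow> (cmod (x - z) * sy)\<^sup>2 = (cmod (z - y) * sx)\<^sup>2"
    using pos by (simp add: power2_eq_iff_nonneg)
  also have "\<dots> \<longleftrightarrow> z \<in> hyperbolic_bisector x y"
    by (simp add: mem_hyperbolic_bisector_iff power_mult_distrib sq)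
  finally show ?thesis .
qed

section \<open>Hyperbolic segments and the midpoint\<close>

lemma circle_point_mem_orth_circle:
  assumes "(cmod c)\<^sup>2 = 1 + r\<^sup>2"
  shows "c + of_real r * cis t \<in> orth_circle 1 c"
proof -
  have "(Re c)\<^sup>2 + (Im c)\<^sup>2 = 1 + r\<^sup>2"
    using assms by (simp add: cmod_power2)
  then show ?thesis
    unfolding mem_orth_circle_iff by simp (use sin_cos_squared_add[of t] in algebra)
qed

lemma hgeod_subset_hyperbolic_line:
  assumes x: "cmod x < 1" and y: "cmod y < 1" and "x \<noteq> y"
  shows "hgeod x y \<subseteq> hyperbolic_line x y \<inter> ball 0 1"
proof (cases "Im (x * cnj y) = 0")
  case True
  then have hgeod: "hgeod x y = closed_segment x y"
    by (simp add: hgeod_def)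
  have "Im (cnj x * y) = - Im (x * cnj y)"
    by simp
  with True have "hyperbolic_line x y = orth_circle 0
      (\<i> * (of_real (1 + (cmod y)\<^sup>2) * x - of_real (1 + (cmod x)\<^sup>2) * y))"
    by (simp add: hyperbolic_line_def)
  then have "convex (hyperbolic_line x y)"
    by (simp only: convex_orth_circle_zero)
  then have "closed_segment x y \<subseteq> hyperbolic_line x y"
    by (intro closed_segment_subset left_mem_hyperbolic_line right_mem_hyperbolic_line)
  moreover have "closed_segment x y \<subseteq> ball 0 1"
    by (rule closed_segment_subset) (use x y in auto)
  ultimately show ?thesis
    using hgeod by blast
next
  case False
  show ?thesis
  proof
    fix z
    assume "z \<in> hgeod x y"
    then obtain c r a b t where cr: "(cmod c)\<^sup>2 = 1 + r\<^sup>2"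
      and xy: "x = c + of_real r * cis a" "y = c + of_real r * cis b"
      and inside: "\<forall>t\<in>closed_segment a b. cmod (c + of_real r * cis t) < 1"
      and t: "t \<in> closed_segment a b" "z = c + of_real r * cis t"
      using False unfolding hgeod_def by auto
    have "orth_circle 1 c = hyperbolic_line x y"
      using orth_circle_eq_hyperbolic_line[OF x y \<open>x \<noteq> y\<close>] circle_point_mem_orth_circle[OF cr]
        orth_circle_neq_UNIV[of 1 c] xy by simp
    then show "z \<in> hyperbolic_line x y \<inter> ball 0 1"
      using circle_point_mem_orth_circle[OF cr] inside t by auto
  qed
qed

lemma cos_ge_min_on_segment:
  fixes a b t :: real
  assumes "\<bar>a\<bar> \<le> pi" "\<bar>b\<bar> \<le> pi" "t \<in> closed_segment a b"
  shows "min (cos a) (cos b) \<le> cos t"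
proof -
  have "\<bar>t\<bar> \<le> \<bar>a\<bar> \<or> \<bar>t\<bar> \<le> \<bar>b\<bar>"
    using assms(3) by (auto simp: closed_segment_eq_real_ivl split: if_splits)
  then show ?thesis
  proof
    assume "\<bar>t\<bar> \<le> \<bar>a\<bar>"
    then have "cos \<bar>a\<bar> \<le> cos \<bar>t\<bar>"
      by (intro cos_monotone_0_pi_le) (use assms in auto)
    then show ?thesis by simp
  next
    assume "\<bar>t\<bar> \<le> \<bar>b\<bar>"
    then have "cos \<bar>b\<bar> \<le> cos \<bar>t\<bar>"
      by (intro cos_monotone_0_pi_le) (use assms in auto)
    then show ?thesis by simp
  qed
qed

text \<open>The law of cosines, with the angle \<open>s\<close> measured from the direction of \<open>-c\<close>.\<close>
lemma norm_square_circle_point: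
  assumes "c \<noteq> 0"
  shows "(cmod (c - of_real r * sgn c * cis s))\<^sup>2 = (cmod c)\<^sup>2 + r\<^sup>2 - 2 * r * cmod c * cos s"
proof -
  define n where "n = cmod c"
  have "sgn c * of_real n = c"
    using assms unfolding n_def by (simp add: sgn_eq)
  then have "c - of_real r * sgn c * cis s = sgn c * (of_real n - of_real r * cis s)"
    by (simp add: algebra_simps)
  then have "cmod (c - of_real r * sgn c * cis s) = cmod (of_real n - of_real r * cis s)"
    using assms by (simp add: norm_mult norm_sgn)
  also have "(cmod (of_real n - of_real r * cis s))\<^sup>2 = (n - r * cos s)\<^sup>2 + (r * sin s)\<^sup>2"
    by (simp add: cmod_power2)
  also have "\<dots> = n\<^sup>2 + r\<^sup>2 - 2 * r * n * cos s"
    unfolding power_mult_distrib sin_squared_eq by (simp add: power2_eq_square algebra_simps)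
  finally show ?thesis
    unfolding n_def by simp
qed

lemma circle_point_angle:
  assumes u: "cmod u = 1" and r: "r > 0" and z: "cmod (z - c) = r"
  shows "\<exists>s. \<bar>s\<bar> \<le> pi \<and> z = c + of_real r * (u * cis s)"
proof -
  define w where "w = cnj u * (z - c)"
  define s where "s = Arg w"
  have "cmod w = r"
    unfolding w_def using u z by (simp add: norm_mult)
  then have "cis s = w / of_real r"
    unfolding s_def using r by (auto simp: cis_Arg sgn_eq)
  then have w: "w = of_real r * cis s"
    using r by simp
  have "u * cnj u = 1"
    using complex_norm_square[of u] u by simp
  then have "z - c = u * w"
    unfolding w_def by (simp add: mult.assoc[symmetric])
  also have "\<dots> = of_real r * (u * cis s)"
    unfolding w by (simp add: algebra_simps)
  finally have "z = c + of_real r * (u * cis s)"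
    by (simp add: algebra_simps)
  moreover have "\<bar>s\<bar> \<le> pi"
    unfolding s_def using Arg_bounded[of w] by linarith
  ultimately show ?thesis by blast
qed

text \<open>Measuring angles \<open>s\<close> from the direction of \<open>-c\<close>, a point of the circle lies in the disk
  iff \<open>r < \<bar>c\<bar> cos s\<close>, and on a segment of \<open>[-\<pi>, \<pi>]\<close> the cosine is at least its smaller
  endpoint value.\<close>
lemma orth_arc_in_disk:
  assumes cr: "(cmod c)\<^sup>2 = 1 + r\<^sup>2" and r: "r > 0" and x: "cmod x < 1" and y: "cmod y < 1"
    and xc: "cmod (x - c) = r" and yc: "cmod (y - c) = r"
  shows "\<exists>a b. x = c + of_real r * cis a \<and> y = c + of_real r * cis b \<and>
    (\<forall>t\<in>closed_segment a b. cmod (c + of_real r * cis t) < 1)"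
proof -
  have "(cmod c)\<^sup>2 > 0"
    unfolding cr by (simp add: add_pos_nonneg)
  then have "c \<noteq> 0"
    by auto
  define u where "u = - sgn c"
  have u: "cmod u = 1"
    unfolding u_def using \<open>c \<noteq> 0\<close> by (simp add: norm_sgn)
  have "u \<noteq> 0"
    using u by auto
  then have cis_Arg_u: "cis (Arg u) = u"
    using u by (simp add: cis_Arg sgn_eq)
  have inside_iff: "cmod (c + of_real r * (u * cis s)) < 1 \<longleftrightarrow> r < cmod c * cos s" for s
  proof -
    have "cmod (c + of_real r * (u * cis s)) < 1 \<longleftrightarrow> (cmod (c + of_real r * (u * cis s)))\<^sup>2 < 1"
      by (simp add: abs_square_less_1)
    also have "\<dots> \<longleftrightarrow> 1 + 2 * r\<^sup>2 - 2 * r * cmod c * cos s < 1"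
      using norm_square_circle_point[OF \<open>c \<noteq> 0\<close>, of r s] cr by (simp add: u_def mult.assoc)
    also have "\<dots> \<longleftrightarrow> r < cmod c * cos s"
      using r by (simp add: power2_eq_square)
    finally show ?thesis .
  qed
  obtain sx sy where s: "\<bar>sx\<bar> \<le> pi" "\<bar>sy\<bar> \<le> pi"
    and xs: "x = c + of_real r * (u * cis sx)" and ys: "y = c + of_real r * (u * cis sy)"
    using circle_point_angle[OF u r xc] circle_point_angle[OF u r yc] by blast
  have in_x: "r < cmod c * cos sx" and in_y: "r < cmod c * cos sy"
    using inside_iff x y xs ys by auto
  have cis_shift: "cis (Arg u + s) = u * cis s" for s
    by (simp add: cis_mult[symmetric] cis_Arg_u)
  show ?thesis
  proof (intro exI conjI ballI)
    show "x = c + of_real r * cis (Arg u + sx)" "y = c + of_real r * cis (Arg u + sy)"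
      using xs ys by (simp_all add: cis_shift)
    fix t
    assume "t \<in> closed_segment (Arg u + sx) (Arg u + sy)"
    then have "t - Arg u \<in> closed_segment sx sy"
      by (auto simp: closed_segment_eq_real_ivl split: if_splits)
    then have "min (cos sx) (cos sy) \<le> cos (t - Arg u)"
      by (rule cos_ge_min_on_segment[OF s])
    then have "cmod c * min (cos sx) (cos sy) \<le> cmod c * cos (t - Arg u)"
      by (simp add: mult_left_mono)
    moreover have "r < cmod c * min (cos sx) (cos sy)"
      using in_x in_y by (simp add: min_def)
    ultimately have "r < cmod c * cos (t - Arg u)"
      by linarith
    then show "cmod (c + of_real r * cis t) < 1"
      using inside_iff cis_shift[of "t - Arg u"] by simp
  qed
qed

lemma equidistant_point_in_connected:
  assumes K: "connected K" "K \<subseteq> ball 0 1" and xy: "x \<in> K" "y \<in> K"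
  shows "\<exists>z\<in>K. hdist x z = hdist z y"
proof -
  define f where "f z = hdist x z - hdist z y" for z
  have disk: "cmod x < 1" "cmod y < 1"
    using K xy by auto
  have "sqrt (1 - (cmod z)\<^sup>2) \<noteq> 0" if "z \<in> K" for z
  proof -
    have "cmod z < 1"
      using K(2) that by auto
    then have "(cmod z)\<^sup>2 < 1"
      by (simp add: abs_square_less_1)
    then show ?thesis
      by simp
  qed
  moreover have "(cmod x)\<^sup>2 < 1" "(cmod y)\<^sup>2 < 1"
    using disk by (simp_all add: abs_square_less_1)
  then have "sqrt (1 - (cmod x)\<^sup>2) \<noteq> 0" "sqrt (1 - (cmod y)\<^sup>2) \<noteq> 0"
    by simp_all
  ultimately have
    ratio: "continuous_on K (\<lambda>z. cmod (x - z) / (sqrt (1 - (cmod x)\<^sup>2) * sqrt (1 - (cmod z)\<^sup>2)))"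
      "continuous_on K (\<lambda>z. cmod (z - y) / (sqrt (1 - (cmod z)\<^sup>2) * sqrt (1 - (cmod y)\<^sup>2)))"
    by (auto intro!: continuous_intros)
  have "continuous_on K (\<lambda>z. arsinh
      (cmod (x - z) / (sqrt (1 - (cmod x)\<^sup>2) * sqrt (1 - (cmod z)\<^sup>2))))"
    by (rule continuous_on_compose2[OF continuous_on_arsinh ratio(1) subset_UNIV])
  moreover have "continuous_on K (\<lambda>z. arsinh
      (cmod (z - y) / (sqrt (1 - (cmod z)\<^sup>2) * sqrt (1 - (cmod y)\<^sup>2))))"
    by (rule continuous_on_compose2[OF continuous_on_arsinh ratio(2) subset_UNIV])
  ultimately have "continuous_on K f"
    unfolding f_def hdist_def by (intro continuous_on_diff continuous_on_mult_left)
  then have "connected (f ` K)"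
    using connected_continuous_image K(1) by blast
  moreover have "f x \<in> f ` K" "f y \<in> f ` K"
    using xy by simp_all
  moreover have "f x \<le> 0" "0 \<le> f y"
    unfolding f_def using hdist_nonneg[OF disk] by (simp_all add: hdist_self)
  ultimately have "0 \<in> f ` K"
    using connected_contains_Icc by fastforce
  then show ?thesis
    unfolding f_def by auto
qed

lemma hyperbolic_line_eq_circle:
  assumes x: "cmod x < 1" and "Im (cnj x * y) \<noteq> 0"
  obtains c r where "r > 0" "(cmod c)\<^sup>2 = 1 + r\<^sup>2" "\<And>z. z \<in> hyperbolic_line x y \<longleftrightarrow> cmod (z - c) = r"
proof -
  define b0 where "b0 = \<i> * (of_real (1 + (cmod y)\<^sup>2) * x - of_real (1 + (cmod x)\<^sup>2) * y)"
  define c where "c = b0 / of_real (2 * Im (cnj x * y))"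
  have circle: "z \<in> hyperbolic_line x y \<longleftrightarrow> (cmod (z - c))\<^sup>2 = (cmod c)\<^sup>2 - 1" for z
    unfolding hyperbolic_line_def b0_def[symmetric] c_def using assms(2)
    by (intro orth_circle_eq_circle) simp
  have "(cmod c)\<^sup>2 - 1 \<noteq> 0"
  proof
    assume "(cmod c)\<^sup>2 - 1 = 0"
    then have "x = c" "(cmod c)\<^sup>2 = 1"
      using circle[of x] left_mem_hyperbolic_line[of x y] by simp_all
    then show False
      using x by (simp add: abs_square_eq_1)
  qed
  moreover have "(cmod c)\<^sup>2 - 1 \<ge> 0"
    using circle[of x] left_mem_hyperbolic_line[of x y] by (metis zero_le_power2)
  ultimately have pos: "(cmod c)\<^sup>2 - 1 > 0"
    by simp
  define r where "r = sqrt ((cmod c)\<^sup>2 - 1)"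
  have "r > 0" "(cmod c)\<^sup>2 = 1 + r\<^sup>2"
    unfolding r_def using pos by simp_all
  moreover have "z \<in> hyperbolic_line x y \<longleftrightarrow> cmod (z - c) = r" for z
    unfolding circle r_def using pos by (auto simp: real_sqrt_unique)
  ultimately show thesis
    using that by blast
qed

lemma ex_equidistant_point_hgeod:
  assumes x: "cmod x < 1" and y: "cmod y < 1"
  shows "\<exists>z\<in>hgeod x y. hdist x z = hdist z y"
proof (cases "Im (x * cnj y) = 0")
  case True
  then have "hgeod x y = closed_segment x y"
    by (simp add: hgeod_def)
  moreover have "closed_segment x y \<subseteq> ball 0 1"
    by (rule closed_segment_subset) (use x y in auto)
  ultimately show ?thesis
    using equidistant_point_in_connected[of "closed_segment x y" x y] by simp
next
  case False
  then have "Im (cnj x * y) \<noteq> 0"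
    by (simp add: algebra_simps)
  then obtain c r where r: "r > 0" and cr: "(cmod c)\<^sup>2 = 1 + r\<^sup>2"
    and line: "\<And>z. z \<in> hyperbolic_line x y \<longleftrightarrow> cmod (z - c) = r"
    using hyperbolic_line_eq_circle[OF x] by blast
  obtain a b where ab: "x = c + of_real r * cis a" "y = c + of_real r * cis b"
    and inside: "\<forall>t\<in>closed_segment a b. cmod (c + of_real r * cis t) < 1"
    using orth_arc_in_disk[OF cr r x y] line left_mem_hyperbolic_line right_mem_hyperbolic_line
    by blast
  define K where "K = (\<lambda>t. c + of_real r * cis t) ` closed_segment a b"
  have "K \<subseteq> hgeod x y"
  proof
    fix z
    assume "z \<in> K"
    then have "\<exists>t\<in>closed_segment a b. z = c + of_real r * cis t"
      unfolding K_def by blast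
    then show "z \<in> hgeod x y"
      unfolding hgeod_def if_not_P[OF False] mem_Collect_eq using r cr ab inside by blast
  qed
  moreover have "\<exists>z\<in>K. hdist x z = hdist z y"
  proof (rule equidistant_point_in_connected)
    show "connected K"
      unfolding K_def by (intro connected_continuous_image continuous_intros connected_segment)
    show "K \<subseteq> ball 0 1" "x \<in> K" "y \<in> K"
      unfolding K_def using inside ab by auto
  qed
  ultimately show ?thesis
    by blast
qed

text \<open>If \<open>z1 \<noteq> z2\<close>, both curves would equal the orthogonal circle through \<open>z1\<close> and \<open>z2\<close>; but \<open>x\<close>
  lies on the first and not on the second.\<close>
lemma hyperbolic_line_bisector_meet_at_most_once:
  assumes x: "cmod x < 1" and y: "cmod y < 1" and "x \<noteq> y"
    and z1: "z1 \<in> hyperbolic_line x y" "z1 \<in> hyperbolic_bisector x y" "cmod z1 < 1"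
    and z2: "z2 \<in> hyperbolic_line x y" "z2 \<in> hyperbolic_bisector x y" "cmod z2 < 1"
  shows "z1 = z2"
proof (rule ccontr)
  assume "z1 \<noteq> z2"
  have "hyperbolic_bisector x y \<noteq> UNIV"
    using left_not_mem_hyperbolic_bisector[OF x \<open>x \<noteq> y\<close>] by blast
  then have "hyperbolic_bisector x y = hyperbolic_line z1 z2"
    using z1(2) z2(2) unfolding hyperbolic_bisector_def
    by (rule orth_circle_eq_hyperbolic_line[OF z1(3) z2(3) \<open>z1 \<noteq> z2\<close>, rotated 2])
  also have "\<dots> = hyperbolic_line x y"
    using z1(1) z2(1) hyperbolic_line_neq_UNIV[OF x y \<open>x \<noteq> y\<close>] unfolding hyperbolic_line_def[of x y]
    by (rule orth_circle_eq_hyperbolic_line[OF z1(3) z2(3) \<open>z1 \<noteq> z2\<close>, symmetric])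
  finally show False
    using left_mem_hyperbolic_line left_not_mem_hyperbolic_bisector[OF x \<open>x \<noteq> y\<close>] by blast
qed

lemma hmidpoint_mem_hyperbolic_line_bisector:
  assumes x: "cmod x < 1" and y: "cmod y < 1" and "x \<noteq> y"
  shows "hmidpoint x y \<in> hyperbolic_line x y \<inter> hyperbolic_bisector x y"
proof -
  have sub: "hgeod x y \<subseteq> hyperbolic_line x y \<inter> ball 0 1"
    by (rule hgeod_subset_hyperbolic_line[OF assms])
  have mid: "z \<in> hgeod x y \<and> hdist x z = hdist z y \<longleftrightarrow>
      z \<in> hgeod x y \<and> z \<in> hyperbolic_bisector x y" for z
    using hdist_eq_iff_mem_hyperbolic_bisector[OF x y] sub by auto
  have "\<exists>!z. z \<in> hgeod x y \<and> hdist x z = hdist z y"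
    unfolding mid
  proof (rule ex_ex1I)
    show "\<exists>z. z \<in> hgeod x y \<and> z \<in> hyperbolic_bisector x y"
      using ex_equidistant_point_hgeod[OF x y] mid by blast
    show "z1 = z2" if "z1 \<in> hgeod x y \<and> z1 \<in> hyperbolic_bisector x y"
      and "z2 \<in> hgeod x y \<and> z2 \<in> hyperbolic_bisector x y" for z1 z2
      using that sub by (intro hyperbolic_line_bisector_meet_at_most_once[OF assms]) auto
  qed
  then have "hmidpoint x y \<in> hgeod x y \<and> hdist x (hmidpoint x y) = hdist (hmidpoint x y) y"
    unfolding hmidpoint_def by (rule theI')
  then show ?thesis
    using mid sub by blast
qed

context
  fixes S :: "complex set"
  assumes zero_in: "0 \<in> S" and one_in: "1 \<in> S"
begin

lemma constructible_curve_hyperbolic_line: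
  assumes x: "x \<in> constructible S" and y: "y \<in> constructible S"
    and disk: "cmod x < 1" "cmod y < 1" and "x \<noteq> y"
  shows "constructible_curve S (hyperbolic_line x y)"
proof -
  note closure = constructible_add[OF zero_in one_in] constructible_diff[OF zero_in one_in]
    constructible_mult[OF zero_in one_in] constructible_of_real_norm_square[OF zero_in one_in]
  have im: "of_real (Im (cnj x * y)) \<in> constructible S"
    by (intro constructible_Im[OF zero_in one_in] closure constructible_cnj[OF zero_in one_in] x y)
  have A: "of_real (2 * Im (cnj x * y)) \<in> constructible S"
    unfolding mult_2 of_real_add by (rule closure(1)[OF im im])
  have ny: "1 + of_real ((cmod y)\<^sup>2) \<in> constructible S"
    and nx: "1 + of_real ((cmod x)\<^sup>2) \<in> constructible S"
    by (intro closure(1,4) constructible_one[OF zero_in one_in] x y)+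
  have "of_real (1 + (cmod y)\<^sup>2) * x - of_real (1 + (cmod x)\<^sup>2) * y \<in> constructible S"
    unfolding of_real_add of_real_1 by (rule closure(2)[OF closure(3)[OF ny x] closure(3)[OF nx y]])
  then have b: "\<i> * (of_real (1 + (cmod y)\<^sup>2) * x - of_real (1 + (cmod x)\<^sup>2) * y) \<in> constructible S"
    by (rule closure(3)[OF constructible_ii[OF zero_in one_in]])
  show ?thesis
    using constructible_curve_orth_circle[OF zero_in one_in A b
        hyperbolic_line_neq_UNIV[OF disk \<open>x \<noteq> y\<close>, unfolded hyperbolic_line_def]
        left_mem_hyperbolic_line[of x y, unfolded hyperbolic_line_def]]
    unfolding hyperbolic_line_def .
qed

lemma constructible_curve_hyperbolic_bisector:
  assumes x: "x \<in> constructible S" and y: "y \<in> constructible S"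
    and disk: "cmod x < 1" "cmod y < 1" and "x \<noteq> y"
  shows "constructible_curve S (hyperbolic_bisector x y)"
proof -
  note closure = constructible_diff[OF zero_in one_in] constructible_mult[OF zero_in one_in]
    constructible_of_real_norm_square[OF zero_in one_in]
  obtain z where "z \<in> hgeod x y" "hdist x z = hdist z y"
    using ex_equidistant_point_hgeod[OF disk] by blast
  moreover from \<open>z \<in> hgeod x y\<close> have "cmod z < 1"
    using hgeod_subset_hyperbolic_line[OF disk \<open>x \<noteq> y\<close>] by auto
  ultimately have z: "z \<in> hyperbolic_bisector x y"
    using hdist_eq_iff_mem_hyperbolic_bisector[OF disk] by blast
  have A: "of_real ((cmod x)\<^sup>2 - (cmod y)\<^sup>2) \<in> constructible S"
    unfolding of_real_diff by (intro closure(1,3) x y)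
  have ny: "1 - of_real ((cmod y)\<^sup>2) \<in> constructible S"
    and nx: "1 - of_real ((cmod x)\<^sup>2) \<in> constructible S"
    by (intro closure(1,3) constructible_one[OF zero_in one_in] x y)+
  have b: "of_real (1 - (cmod y)\<^sup>2) * x - of_real (1 - (cmod x)\<^sup>2) * y \<in> constructible S"
    unfolding of_real_diff of_real_1 by (rule closure(1)[OF closure(2)[OF ny x] closure(2)[OF nx y]])
  have "hyperbolic_bisector x y \<noteq> UNIV"
    using left_not_mem_hyperbolic_bisector[OF disk(1) \<open>x \<noteq> y\<close>] by blast
  then show ?thesis
    using constructible_curve_orth_circle[OF zero_in one_in A b _ z[unfolded hyperbolic_bisector_def]]
    unfolding hyperbolic_bisector_def by blast
qed

end

theorem theorem1p2:
  fixes x y :: complex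
  assumes "cmod x < 1" and "cmod y < 1" and "x \<noteq> y"
  shows "hmidpoint x y \<in> constructible {0, 1, x, y}"
proof (rule constructible_curve_intersection)
  have S: "0 \<in> {0, 1, x, y}" "1 \<in> {0, 1, x, y}"
    and xy: "x \<in> constructible {0, 1, x, y}" "y \<in> constructible {0, 1, x, y}"
    by (simp_all add: constructible.base)
  show "constructible_curve {0, 1, x, y} (hyperbolic_line x y)"
    by (rule constructible_curve_hyperbolic_line[OF S xy assms])
  show "constructible_curve {0, 1, x, y} (hyperbolic_bisector x y)"
    by (rule constructible_curve_hyperbolic_bisector[OF S xy assms])
  show "hyperbolic_line x y \<noteq> hyperbolic_bisector x y"
    using left_mem_hyperbolic_line left_not_mem_hyperbolic_bisector[OF assms(1,3)] by blast
  show "hmidpoint x y \<in> hyperbolic_line x y" "hmidpoint x y \<in> hyperbolic_bisector x y"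
    using hmidpoint_mem_hyperbolic_line_bisector[OF assms] by simp_all
qed

end
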